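(* Let $(G,* )$ be a metrizable topological group. The following are equivalent: (1) $G$ has the property ${\sf S}_c(\mathcal{O}_{\sf nbd},\mathcal{O})$; (2) $G$ has the Haver property with respect to every left-invariant metric on $G$ that is compatible with (generates) the topology of $G$.
   Context: For a topological group $(G,* )$ with identity $e$ and a neighborhood $U$ of $e$, let $\mathcal{O}(U)=\{x*U: x\in G\}$, an open cover of $G$, and $\mathcal{O}_{\sf nbd}=\{\mathcal{O}(U): U \text{ a neighborhood of } e\}$. $\mathcal{O}$ denotes the collection of all open covers of $G$. A family $\mathcal{B}$ refines a family $\mathcal{A}$ if every member of $\mathcal{B}$ is contained in some member of $\mathcal{A}$. For collections $\mathcal{A},\mathcal{B}$ of families of subsets of $G$, ${\sf S}_c(\mathcal{A},\mathcal{B})$ is the statement: for each sequence $(A_n:n<\infty)$ of elements of $\mathcal{A}$ there is a sequence $(B_n:n<\infty)$ such that each $B_n$ is a pairwise disjoint family of open sets refining $A_n$ and $\bigcup_{n<\infty}B_n\in\mathcal{B}$. A metrizable space $X$ is Haver with respect to a metric $d$ if for each sequence $(\epsilon_n:n<\infty)$ of positive reals there is a sequence $(\mathcal{V}_n:n<\infty)$ where each $\mathcal{V}_n$ is a pairwise disjoint family of open sets each of $d$-diameter less than $\epsilon_n$, such that $\bigcup_{n<\infty}\mathcal{V}_n$ covers $X$. A metric $d$ on $G$ is left-invariant if $d(g*x,g*y)=d(x,y)$ for all $g,x,y\in G$. *)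

theory Defs
  imports "HOL-Analysis.Analysis"
begin

text \<open>Groups are written additively (type class topological_group_add, which is NOT
assumed commutative); the identity e is 0 and x * U is the left translate (+) x ` U.\<close>

definition nbd_cover :: "'a::topological_group_add set \<Rightarrow> 'a set set" where
  "nbd_cover U = {(\<lambda>y. x + y) ` U | x. True}"

definition refines :: "'a set set \<Rightarrow> 'a set set \<Rightarrow> bool" where
  "refines B A \<longleftrightarrow> (\<forall>b\<in>B. \<exists>a\<in>A. b \<subseteq> a)"

text \<open>S_c(O_nbd, O): neighbourhoods of the identity are taken to be open sets containing 0.\<close>
definition Sc_nbd_open :: "'a::topological_group_add itself \<Rightarrow> bool" where
  "Sc_nbd_open _ \<longleftrightarrow>
     (\<forall>U :: nat \<Rightarrow> 'a set. (\<forall>n. open (U n) \<and> 0 \<in> U n) \<longrightarrow>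
        (\<exists>B :: nat \<Rightarrow> 'a set set.
            (\<forall>n. disjoint (B n) \<and> (\<forall>b\<in>B n. open b) \<and> refines (B n) (nbd_cover (U n))) \<and>
            \<Union>(\<Union>n. B n) = UNIV))"

text \<open>Diameter with respect to a metric d, valued in the extended reals (empty set: -\<infinity>).\<close>
definition d_diam :: "('a \<Rightarrow> 'a \<Rightarrow> real) \<Rightarrow> 'a set \<Rightarrow> ereal" where
  "d_diam d S = (SUP x\<in>S. SUP y\<in>S. ereal (d x y))"

definition Haver_wrt :: "('a::topological_space \<Rightarrow> 'a \<Rightarrow> real) \<Rightarrow> bool" where
  "Haver_wrt d \<longleftrightarrow>
     (\<forall>\<epsilon> :: nat \<Rightarrow> real. (\<forall>n. \<epsilon> n > 0) \<longrightarrow>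
        (\<exists>V :: nat \<Rightarrow> 'a set set.
            (\<forall>n. disjoint (V n) \<and> (\<forall>v\<in>V n. open v \<and> d_diam d v < ereal (\<epsilon> n))) \<and>
            \<Union>(\<Union>n. V n) = UNIV))"

definition compatible_metric :: "('a::topological_space \<Rightarrow> 'a \<Rightarrow> real) \<Rightarrow> bool" where
  "compatible_metric d \<longleftrightarrow> Metric_space UNIV d \<and> Metric_space.mtopology UNIV d = euclidean"

definition left_invariant :: "('a::plus \<Rightarrow> 'a \<Rightarrow> real) \<Rightarrow> bool" where
  "left_invariant d \<longleftrightarrow> (\<forall>g x y. d (g + x) (g + y) = d x y)"

end

theory Submission
  imports Defs
begin

(* For every compatible left-invariant metric d the two properties are in fact
   equivalent individually (lemmas Sc_imp_Haver and Haver_imp_Sc):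
   - S_c => Haver: apply S_c to the balls B(0, eps_n/3); by left invariance every
     translate x + B(0,r) has d-diameter at most 2r (translate_ball_diam).
   - Haver => S_c: for open U_n containing 0 choose r_n with B(0,r_n) inside U_n; a set
     of d-diameter < r_n containing y then lies in y + U_n (small_set_in_translate).
   Hence the theorem only needs one compatible left-invariant metric to exist, which is
   the Birkhoff-Kakutani theorem.  It is proved in the locale nbhd_chain: from a base
   of symmetric open neighbourhoods V_n of 0 with V_(n+1) + V_(n+1) + V_(n+1) inside V_n
   define level(x) = inf {2^-n : x in V_n}, the norm
   N(w) = inf {level(z_1) + ... + level(z_k) : z_1 + ... + z_k = w}
   and the metric d(x,y) = N(-x + y).  The crucial estimate level <= 2 N
   (level_sum_list) makes d compatible with the topology. *)

lemma open_left_translate: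
  fixes S :: "'a::topological_group_add set"
  assumes "open S"
  shows "open ((\<lambda>y. a + y) ` S)"
proof -
  have "(\<lambda>y. a + y) ` S = (\<lambda>y. -a + y) -` S"
    by (force simp: add.assoc[symmetric] intro: image_eqI[where x = "-a + _"])
  moreover have "open ((\<lambda>y. -a + y) -` S)"
    by (intro open_vimage assms continuous_intros)
  ultimately show ?thesis by simp
qed

text \<open>Continuity of addition at (0,0): every neighbourhood of 0 contains V + V for some V.\<close>
lemma nbhd_half:
  fixes U :: "'a::topological_group_add set"
  assumes "open U" "0 \<in> U"
  shows "\<exists>V. open V \<and> 0 \<in> V \<and> (\<forall>a\<in>V. \<forall>b\<in>V. a + b \<in> U)"
proof -
  have "open ((\<lambda>p. fst p + snd p) -` U)"
    by (intro open_vimage assms continuous_intros)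
  moreover have "(0, 0) \<in> (\<lambda>p. fst p + snd p) -` U" using assms by simp
  ultimately obtain A B where "open A" "open B" "(0, 0) \<in> A \<times> B"
      "A \<times> B \<subseteq> (\<lambda>p. fst p + snd p) -` U"
    by (rule open_prod_elim)
  then show ?thesis by (intro exI[of _ "A \<inter> B"]) auto
qed

lemma nbhd_symmetric_third:
  fixes U :: "'a::topological_group_add set"
  assumes "open U" "0 \<in> U"
  shows "\<exists>V. open V \<and> 0 \<in> V \<and> (\<forall>x\<in>V. -x \<in> V) \<and>
             (\<forall>a\<in>V. \<forall>b\<in>V. \<forall>c\<in>V. a + b + c \<in> U)"
proof -
  obtain V1 where V1: "open V1" "0 \<in> V1" "\<forall>a\<in>V1. \<forall>b\<in>V1. a + b \<in> U"
    using nbhd_half[OF assms] by blast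
  obtain V2 where V2: "open V2" "0 \<in> V2" "\<forall>a\<in>V2. \<forall>b\<in>V2. a + b \<in> V1"
    using nbhd_half[OF V1(1,2)] by blast
  define W where "W = V1 \<inter> V2"
  have "open (uminus -` W)"
    unfolding W_def using V1 V2 by (intro open_vimage open_Int continuous_intros) auto
  then show ?thesis
    using V1 V2 by (intro exI[of _ "W \<inter> uminus -` W"]) (auto simp: W_def)
qed

lemma sum_list_threshold_split:
  fixes g :: "'b \<Rightarrow> real"
  assumes "0 \<le> t" "t < sum_list (map g zs)"
  shows "\<exists>as c bs. zs = as @ c # bs \<and> sum_list (map g as) \<le> t \<and>
                   t < sum_list (map g as) + g c"
  using assms
proof (induction zs arbitrary: t)
  case (Cons x ys)
  show ?case
  proof (cases "t < g x")
    case True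
    then show ?thesis using Cons.prems by (intro exI[of _ "[]"]) auto
  next
    case False
    then obtain as c bs where "ys = as @ c # bs" "sum_list (map g as) \<le> t - g x"
        "t - g x < sum_list (map g as) + g c"
      using Cons.IH[of "t - g x"] Cons.prems by auto
    then show ?thesis by (intro exI[of _ "x # as"]) auto
  qed
qed simp

lemma dyadic_interval:
  fixes S :: real
  assumes "0 < S" "S < 1"
  shows "\<exists>k. (1/2)^Suc k \<le> S \<and> S < (1/2)^k"
proof -
  have "(1/2)^n \<le> S \<Longrightarrow> \<exists>k. (1/2)^Suc k \<le> S \<and> S < (1/2)^k" for n
  proof (induction n)
    case (Suc n)
    then show ?case by (cases "(1/2::real)^n \<le> S") auto
  qed (use assms in simp)
  moreover obtain n where "(1/2::real)^n < S"
    using real_arch_pow_inv[of S "1/2"] assms by auto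
  ultimately show ?thesis by (meson less_imp_le)
qed

section \<open>The Birkhoff-Kakutani construction\<close>

locale nbhd_chain =
  fixes V :: "nat \<Rightarrow> 'a::topological_group_add set"
  assumes V_0: "V 0 = UNIV"
    and V_open: "open (V n)"
    and V_zero: "0 \<in> V n"
    and V_sym: "x \<in> V n \<Longrightarrow> -x \<in> V n"
    and V_third: "a \<in> V (Suc n) \<Longrightarrow> b \<in> V (Suc n) \<Longrightarrow> c \<in> V (Suc n) \<Longrightarrow> a + b + c \<in> V n"
    and V_sep: "(\<And>n. x \<in> V n) \<Longrightarrow> x = 0"
    and V_base: "open S \<Longrightarrow> 0 \<in> S \<Longrightarrow> \<exists>n. V n \<subseteq> S"
begin

text \<open>The chain is decreasing, since V (n+1) = V (n+1) + 0 + 0 lies in V n.\<close>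
lemma V_antimono: "m \<le> n \<Longrightarrow> V n \<subseteq> V m"
proof (induction n rule: dec_induct)
  case (step n)
  have "V (Suc n) \<subseteq> V n"
    using V_third[of _ n 0 0] V_zero by fastforce
  with step.IH show ?case by blast
qed simp

definition level :: "'a \<Rightarrow> real" where
  "level x = Inf {(1/2)^n | n. x \<in> V n}"

lemma level_le: "x \<in> V n \<Longrightarrow> level x \<le> (1/2)^n"
  unfolding level_def by (rule cInf_lower) (auto intro!: bdd_belowI[of _ 0])

lemma level_ge: "x \<notin> V (Suc k) \<Longrightarrow> (1/2)^k \<le> level x"
  unfolding level_def
proof (rule cInf_greatest, use V_0 in blast, clarify)
  fix n assume "x \<notin> V (Suc k)" "x \<in> V n"
  then have "n \<le> k" using V_antimono[of "Suc k" n] by (cases "Suc k \<le> n") auto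
  then show "(1/2::real)^k \<le> (1/2)^n" by (simp add: power_decreasing)
qed

lemma level_nonneg: "0 \<le> level x"
  unfolding level_def by (rule cInf_greatest) (use V_0 in auto)

lemma level_le_1: "level x \<le> 1"
  using level_le[of x 0] V_0 by simp

lemma level_small: "level x < 2 * (1/2)^k \<Longrightarrow> x \<in> V k"
  using level_ge[of x "k - 1"] V_0 by (cases k) fastforce+

lemma level_zero: "level 0 = 0"
proof -
  have "level 0 \<le> (1/2)^n" for n using level_le V_zero by blast
  moreover have False if pos: "level 0 > 0"
  proof -
    obtain n where "(1/2::real)^n < level 0"
      using real_arch_pow_inv[OF pos, of "1/2"] by auto
    with \<open>level 0 \<le> (1/2)^n\<close> show False by simp
  qed
  ultimately show ?thesis using level_nonneg[of 0] by force
qed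

lemma level_eq_0: "level x = 0 \<Longrightarrow> x = 0"
  by (rule V_sep, rule level_small) simp

lemma level_uminus: "level (-x) = level x"
  unfolding level_def using V_sym by (metis minus_minus)

definition level_sum :: "'a list \<Rightarrow> real" where
  "level_sum zs = sum_list (map level zs)"

lemma level_sum_nonneg: "0 \<le> level_sum zs"
  unfolding level_sum_def by (rule sum_list_nonneg) (auto intro: level_nonneg)

text \<open>Split the list into two halves of level sum at most S/2 around one element; all three
  parts lie in V(k+1) where 2^-(k+1) \<le> S, so their sum lies in V k.\<close>
lemma level_sum_list: "level (sum_list zs) \<le> 2 * level_sum zs"
proof (induction "length zs" arbitrary: zs rule: less_induct)
  case less
  define S where "S = level_sum zs"
  consider "1/2 \<le> S" | "S = 0" | "0 < S" "S < 1/2"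
    using level_sum_nonneg[of zs] unfolding S_def by linarith
  then show ?case
  proof cases
    case 1
    then show ?thesis using level_le_1[of "sum_list zs"] S_def by simp
  next
    case 2
    then have "\<forall>z\<in>set zs. z = 0"
      using level_eq_0 sum_list_nonneg_eq_0_iff[of "map level zs"] level_nonneg
      unfolding S_def level_sum_def by auto
    then have "sum_list zs = 0" by (induction zs) auto
    then show ?thesis using level_zero level_sum_nonneg by simp
  next
    case 3
    obtain as c bs where zs: "zs = as @ c # bs" and as: "level_sum as \<le> S/2"
        and c: "S/2 < level_sum as + level c"
      using sum_list_threshold_split[of "S/2" level zs] 3 unfolding S_def level_sum_def by auto
    have S_split: "S = level_sum as + level c + level_sum bs"
      by (simp add: S_def zs level_sum_def)
    obtain k where k: "(1/2)^Suc k \<le> S" "S < (1/2)^k"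
      using dyadic_interval[of S] 3 by auto
    have "level (sum_list as) \<le> S" "level (sum_list bs) \<le> S"
      using less[of as] less[of bs] as c S_split by (auto simp: zs)
    moreover have "level c \<le> S"
      using S_split level_sum_nonneg[of as] level_sum_nonneg[of bs] by simp
    ultimately have "sum_list as + c + sum_list bs \<in> V k"
      using k(2) by (intro V_third level_small) auto
    then have "level (sum_list zs) \<le> (1/2)^k"
      using level_le by (simp add: zs add.assoc)
    then show ?thesis using k(1) S_def by simp
  qed
qed

definition chain_norm :: "'a \<Rightarrow> real" where
  "chain_norm w = Inf {level_sum zs | zs. sum_list zs = w}"

lemma chain_norm_le: "sum_list zs = w \<Longrightarrow> chain_norm w \<le> level_sum zs"
  unfolding chain_norm_def
  by (rule cInf_lower) (auto intro!: bdd_belowI[of _ 0] simp: level_sum_nonneg)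

lemma chain_norm_greatest:
  "(\<And>zs. sum_list zs = w \<Longrightarrow> c \<le> level_sum zs) \<Longrightarrow> c \<le> chain_norm w"
  unfolding chain_norm_def by (rule cInf_greatest) (auto intro!: exI[of _ "[w]"])

lemma chain_norm_le_level: "chain_norm w \<le> level w"
  using chain_norm_le[of "[w]" w] by (simp add: level_sum_def)

lemma level_le_chain_norm: "level w \<le> 2 * chain_norm w"
proof -
  have "level w / 2 \<le> chain_norm w"
  proof (rule chain_norm_greatest)
    fix zs assume "sum_list zs = w"
    then show "level w / 2 \<le> level_sum zs" using level_sum_list[of zs] by simp
  qed
  then show ?thesis by simp
qed

lemma chain_norm_nonneg: "0 \<le> chain_norm w"
  using level_le_chain_norm[of w] level_nonneg[of w] by simp

lemma chain_norm_eq_0_iff: "chain_norm w = 0 \<longleftrightarrow> w = 0"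
  using level_le_chain_norm[of w] chain_norm_le_level[of 0] chain_norm_nonneg[of 0]
    level_nonneg[of w] level_eq_0 level_zero by force

text \<open>The norm axioms: subadditivity (concatenate decompositions) and symmetry
  (negate and reverse a decomposition).\<close>
lemma chain_norm_add: "chain_norm (a + b) \<le> chain_norm a + chain_norm b"
proof -
  have "chain_norm (a + b) - level_sum ws \<le> chain_norm a" if "sum_list ws = b" for ws
    using that chain_norm_le[of "_ @ ws" "a + b"]
    by (intro chain_norm_greatest) (force simp: level_sum_def)
  then have "chain_norm (a + b) - chain_norm a \<le> chain_norm b"
    by (intro chain_norm_greatest) force
  then show ?thesis by simp
qed

lemma chain_norm_uminus: "chain_norm (-w) = chain_norm w"
proof -
  have "chain_norm (-w) \<le> chain_norm w" for w
  proof (rule chain_norm_greatest)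
    fix zs assume "sum_list zs = w"
    moreover have "sum_list (rev (map uminus zs)) = - sum_list zs"
      by (induction zs) (auto simp: minus_add)
    moreover have "level_sum (rev (map uminus zs)) = level_sum zs"
      by (induction zs) (auto simp: level_sum_def level_uminus)
    ultimately show "chain_norm (-w) \<le> level_sum zs"
      using chain_norm_le by metis
  qed
  from this[of w] this[of "-w"] show ?thesis by simp
qed

definition chain_dist :: "'a \<Rightarrow> 'a \<Rightarrow> real" where
  "chain_dist x y = chain_norm (-x + y)"

lemma chain_dist_metric: "Metric_space UNIV chain_dist"
proof
  fix x y z :: 'a
  show "0 \<le> chain_dist x y" by (simp add: chain_dist_def chain_norm_nonneg)
  have "- y + x = - (- x + y)" by (simp add: minus_add)
  then show "chain_dist x y = chain_dist y x" by (simp add: chain_dist_def chain_norm_uminus)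
  have "-x + y = 0 \<longleftrightarrow> x = y"
    by (metis add.left_inverse add_minus_cancel)
  then show "chain_dist x y = 0 \<longleftrightarrow> x = y" by (simp add: chain_dist_def chain_norm_eq_0_iff)
  have "- x + z = (- x + y) + (- y + z)" by (simp add: add.assoc[symmetric])
  then show "chain_dist x z \<le> chain_dist x y + chain_dist y z"
    unfolding chain_dist_def using chain_norm_add by metis
qed

lemma chain_dist_left_invariant: "left_invariant chain_dist"
  unfolding left_invariant_def chain_dist_def by (simp add: minus_add add.assoc[symmetric])

lemma chain_dist_translate: "v \<in> V n \<Longrightarrow> chain_dist x (x + v) \<le> (1/2)^n"
  using chain_norm_le_level[of v] level_le[of v n]
  by (simp add: chain_dist_def add.assoc[symmetric])

lemma chain_dist_small: "chain_dist x z < (1/2)^n \<Longrightarrow> -x + z \<in> V n"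
  using level_le_chain_norm[of "-x + z"] by (intro level_small) (simp add: chain_dist_def)

lemma chain_dist_compatible: "compatible_metric chain_dist"
proof -
  interpret CD: Metric_space UNIV chain_dist by (rule chain_dist_metric)
  have "openin CD.mtopology S \<longleftrightarrow> open S" for S
  proof
    assume "openin CD.mtopology S"
    then have balls: "\<forall>x\<in>S. \<exists>r>0. CD.mball x r \<subseteq> S" by (simp add: CD.openin_mtopology)
    show "open S"
      unfolding open_subopen[of S]
    proof
      fix y assume "y \<in> S"
      then obtain r where r: "r > 0" "CD.mball y r \<subseteq> S" using balls by blast
      obtain n where n: "(1/2::real)^n < r" using real_arch_pow_inv[of r "1/2"] r by auto
      have "(\<lambda>v. y + v) ` V n \<subseteq> S"
        using r chain_dist_translate[of _ n y] n by force
      moreover have "y \<in> (\<lambda>v. y + v) ` V n" using V_zero by (force intro: image_eqI[of _ _ 0])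
      ultimately show "\<exists>T. open T \<and> y \<in> T \<and> T \<subseteq> S"
        using open_left_translate[OF V_open] by blast
    qed
  next
    assume "open S"
    show "openin CD.mtopology S" unfolding CD.openin_mtopology
    proof (intro conjI allI impI)
      fix x assume "x \<in> S"
      then have "open ((\<lambda>y. -x + y) ` S)" "0 \<in> (\<lambda>y. -x + y) ` S"
        using open_left_translate[OF \<open>open S\<close>] by (auto intro: image_eqI[of _ _ x])
      then obtain n where n: "V n \<subseteq> (\<lambda>y. -x + y) ` S" using V_base by blast
      have "z \<in> S" if z: "chain_dist x z < (1/2)^n" for z
      proof -
        obtain y where "y \<in> S" "-x + z = -x + y" using chain_dist_small[OF z] n by auto
        then show ?thesis by simp
      qed
      then have "CD.mball x ((1/2)^n) \<subseteq> S" by auto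
      then show "\<exists>r>0. CD.mball x r \<subseteq> S" by (intro exI[of _ "(1/2)^n"]) simp
    qed simp
  qed
  then show ?thesis
    unfolding compatible_metric_def using chain_dist_metric by (simp add: topology_eq)
qed

end

text \<open>A shrinking neighbourhood base of 0 with trivial intersection yields a neighbourhood
  chain, by choosing symmetric "cube roots" of V n \<inter> W n recursively.\<close>
lemma nbhd_chain_exists:
  fixes W :: "nat \<Rightarrow> 'a::topological_group_add set"
  assumes W_open: "\<And>n. open (W n)" and W_zero: "\<And>n. 0 \<in> W n"
    and W_sep: "\<And>x. (\<And>n. x \<in> W n) \<Longrightarrow> x = 0"
    and W_base: "\<And>S. open S \<Longrightarrow> 0 \<in> S \<Longrightarrow> \<exists>n. W n \<subseteq> S"
  shows "\<exists>V :: nat \<Rightarrow> 'a set. nbhd_chain V"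
proof -
  define P where "P n U \<longleftrightarrow> open U \<and> 0 \<in> U \<and> (\<forall>x\<in>U. -x \<in> U) \<and> (n = 0 \<longrightarrow> U = UNIV)"
    for n :: nat and U :: "'a set"
  define Q where "Q n U U' \<longleftrightarrow> (\<forall>a\<in>U'. \<forall>b\<in>U'. \<forall>c\<in>U'. a + b + c \<in> U \<inter> W n)"
    for n :: nat and U U' :: "'a set"
  have start: "\<exists>U. P 0 U" unfolding P_def by (intro exI[of _ UNIV]) simp
  have step: "\<exists>U'. P (Suc n) U' \<and> Q n U U'" if "P n U" for n U
    using nbhd_symmetric_third[of "U \<inter> W n"] that W_open W_zero
    unfolding P_def Q_def by auto
  obtain V where V: "\<forall>n. P n (V n) \<and> Q n (V n) (V (Suc n))"
    using dependent_nat_choice[of P Q, OF start step] by blast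
  then have V_third: "a + b + c \<in> V n \<inter> W n"
    if "a \<in> V (Suc n)" "b \<in> V (Suc n)" "c \<in> V (Suc n)" for a b c n
    using that unfolding Q_def by blast
  have V_zero: "0 \<in> V n" for n using V unfolding P_def by blast
  have V_W: "V (Suc n) \<subseteq> W n" for n
    using V_third[of _ n 0 0] V_zero by force
  have "nbhd_chain V"
  proof
    show "V 0 = UNIV" using V unfolding P_def by blast
    show "open (V n)" for n using V unfolding P_def by blast
    show "0 \<in> V n" for n by (rule V_zero)
    show "-x \<in> V n" if "x \<in> V n" for x n
      using V that unfolding P_def by blast
    show "a + b + c \<in> V n" if "a \<in> V (Suc n)" "b \<in> V (Suc n)" "c \<in> V (Suc n)" for a b c n
      using V_third[OF that] by blast
    show "x = 0" if "\<And>n. x \<in> V n" for x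
      using W_sep V_W that by blast
    show "\<exists>n. V n \<subseteq> S" if "open S" "0 \<in> S" for S :: "'a set"
      using W_base[OF that] V_W by blast
  qed
  then show ?thesis by blast
qed

lemma metrizable_nbhd_base:
  assumes "metrizable_space (euclidean :: 'a::topological_space topology)"
  shows "\<exists>W :: nat \<Rightarrow> 'a set. (\<forall>n. open (W n) \<and> z \<in> W n) \<and>
           (\<forall>x. (\<forall>n. x \<in> W n) \<longrightarrow> x = z) \<and> (\<forall>S. open S \<and> z \<in> S \<longrightarrow> (\<exists>n. W n \<subseteq> S))"
proof -
  obtain M m where M: "Metric_space M m" and top: "(euclidean :: 'a topology) = Metric_space.mtopology M m"
    using assms unfolding metrizable_space_def by blast
  have "M = topspace (Metric_space.mtopology M m)"
    using Metric_space.topspace_mtopology[OF M] by simp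
  also have "\<dots> = UNIV" by (simp flip: top)
  finally have "M = UNIV" .
  with M top interpret Metric_space UNIV m by simp
  from \<open>M = UNIV\<close> top have top: "(euclidean :: 'a topology) = mtopology" by simp
  define W where "W n = mball z (1 / (real n + 1))" for n
  have "open (W n) \<and> z \<in> W n" for n
    using top by (simp add: W_def open_openin)
  moreover have "x = z" if "\<forall>n. x \<in> W n" for x
  proof (rule ccontr)
    assume "x \<noteq> z"
    then obtain n where "1 / real (Suc n) < m z x"
      using nat_approx_posE[of "m z x"] by auto
    moreover have "m z x < 1 / real (Suc n)"
      using that[rule_format, of n] by (simp add: W_def add.commute)
    ultimately show False by simp
  qed
  moreover have "\<exists>n. W n \<subseteq> S" if S: "open S" "z \<in> S" for S
  proof -
    have "openin mtopology S" using S(1) top by (simp add: open_openin)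
    then obtain r where "r > 0" "mball z r \<subseteq> S"
      using S(2) openin_mtopology by blast
    moreover obtain n where "1 / real (Suc n) < r" using \<open>r > 0\<close> by (rule nat_approx_posE)
    ultimately have "W n \<subseteq> S" by (auto simp: W_def add.commute)
    then show ?thesis by blast
  qed
  ultimately show ?thesis by blast
qed

lemma metrizable_group_left_invariant_metric:
  assumes "metrizable_space (euclidean :: 'a::topological_group_add topology)"
  shows "\<exists>d :: 'a \<Rightarrow> 'a \<Rightarrow> real. compatible_metric d \<and> left_invariant d"
proof -
  obtain W :: "nat \<Rightarrow> 'a set" where W: "\<forall>n. open (W n) \<and> 0 \<in> W n"
      "\<forall>x. (\<forall>n. x \<in> W n) \<longrightarrow> x = 0" "\<forall>S. open S \<and> 0 \<in> S \<longrightarrow> (\<exists>n. W n \<subseteq> S)"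
    using metrizable_nbhd_base[OF assms, of 0] by blast
  have "\<exists>V :: nat \<Rightarrow> 'a set. nbhd_chain V"
    by (rule nbhd_chain_exists[of W]) (use W in auto)
  then obtain V :: "nat \<Rightarrow> 'a set" where "nbhd_chain V" ..
  then interpret nbhd_chain V .
  show ?thesis
    by (intro exI[of _ chain_dist] conjI chain_dist_compatible chain_dist_left_invariant)
qed

section \<open>Compatible left-invariant metrics\<close>

lemma d_diam_ge: "x \<in> S \<Longrightarrow> y \<in> S \<Longrightarrow> ereal (d x y) \<le> d_diam d S"
  unfolding d_diam_def by (rule SUP_upper2[of x]) (auto intro: SUP_upper)

lemma d_diam_le: "(\<And>x y. x \<in> S \<Longrightarrow> y \<in> S \<Longrightarrow> d x y \<le> c) \<Longrightarrow> d_diam d S \<le> ereal c"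
  unfolding d_diam_def by (auto intro!: SUP_least)

lemma left_invariant_dist_0:
  fixes d :: "'a::group_add \<Rightarrow> 'a \<Rightarrow> real"
  assumes "left_invariant d"
  shows "d x y = d 0 (-x + y)"
proof -
  have "d x y = d (x + 0) (x + (-x + y))" by (simp add: add.assoc[symmetric])
  also have "\<dots> = d 0 (-x + y)" using assms unfolding left_invariant_def by blast
  finally show ?thesis .
qed

lemma compatible_metric_open_ball:
  assumes "compatible_metric d"
  shows "open {y. d x y < r}"
proof -
  interpret Metric_space UNIV d using assms(1) unfolding compatible_metric_def by (rule conjunct1)
  have top: "mtopology = euclidean" using assms(1) unfolding compatible_metric_def by (rule conjunct2)
  have "mball x r = {y. d x y < r}" by auto
  with openin_mball[of x r] have "openin mtopology {y. d x y < r}" by (simp only:)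
  then show ?thesis by (simp only: top open_openin)
qed

lemma compatible_metric_ball_subset:
  assumes "compatible_metric d" "open U" "x \<in> U"
  shows "\<exists>r>0. \<forall>y. d x y < r \<longrightarrow> y \<in> U"
proof -
  interpret Metric_space UNIV d using assms(1) unfolding compatible_metric_def by (rule conjunct1)
  have top: "mtopology = euclidean" using assms(1) unfolding compatible_metric_def by (rule conjunct2)
  have "openin mtopology U" using assms(2) by (simp only: top open_openin)
  then obtain r where "r > 0" "mball x r \<subseteq> U" using assms(3) openin_mtopology by blast
  then show ?thesis by (intro exI[of _ r]) auto
qed

lemma translate_ball_diam:
  assumes "Metric_space UNIV d" "left_invariant d"
  shows "d_diam d ((\<lambda>y. x + y) ` {u. d 0 u < r}) \<le> ereal (2 * r)"
proof (rule d_diam_le, clarify)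
  interpret Metric_space UNIV d by fact
  fix u v assume "d 0 u < r" "d 0 v < r"
  moreover have "d (x + u) (x + v) = d u v"
    using assms(2) by (simp add: left_invariant_def)
  moreover have "d u v \<le> d 0 u + d 0 v"
    using triangle[of u 0 v] commute[of u 0] by simp
  ultimately show "d (x + u) (x + v) \<le> 2 * r" by simp
qed

lemma small_set_in_translate:
  fixes d :: "'a::group_add \<Rightarrow> 'a \<Rightarrow> real"
  assumes "left_invariant d" "\<forall>w. d 0 w < r \<longrightarrow> w \<in> U" "d_diam d b < ereal r" "y \<in> b"
  shows "b \<subseteq> (\<lambda>w. y + w) ` U"
proof
  fix z assume "z \<in> b"
  have "ereal (d y z) < ereal r"
    using d_diam_ge[OF \<open>y \<in> b\<close> \<open>z \<in> b\<close>] assms(3) by (rule order_le_less_trans)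
  then have "d 0 (-y + z) < r"
    using left_invariant_dist_0[OF assms(1)] by simp
  then have "-y + z \<in> U" using assms(2) by blast
  moreover have "z = y + (-y + z)" by (simp add: add.assoc[symmetric])
  ultimately show "z \<in> (\<lambda>w. y + w) ` U" by (rule rev_image_eqI)
qed

lemma Sc_imp_Haver:
  fixes d :: "'a::topological_group_add \<Rightarrow> 'a \<Rightarrow> real"
  assumes Sc: "Sc_nbd_open TYPE('a)" and d: "compatible_metric d" "left_invariant d"
  shows "Haver_wrt d"
  unfolding Haver_wrt_def
proof (intro allI impI)
  fix \<epsilon> :: "nat \<Rightarrow> real" assume \<epsilon>: "\<forall>n. 0 < \<epsilon> n"
  have metric: "Metric_space UNIV d" using d(1) unfolding compatible_metric_def by (rule conjunct1)
  define U where "U n = {u. d 0 u < \<epsilon> n / 3}" for n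
  have "open (U n)" for n
    unfolding U_def by (rule compatible_metric_open_ball[OF d(1)])
  moreover have "0 \<in> U n" for n
    using \<epsilon> Metric_space.zero[OF metric, of 0 0] by (simp add: U_def)
  ultimately have U_nbhd: "\<forall>n. open (U n) \<and> 0 \<in> U n" by blast
  have "\<exists>B. (\<forall>n. disjoint (B n) \<and> (\<forall>b\<in>B n. open b) \<and> refines (B n) (nbd_cover (U n))) \<and>
                 \<Union>(\<Union>n. B n) = UNIV"
    using Sc[unfolded Sc_nbd_open_def, rule_format, OF U_nbhd[rule_format]] .
  then obtain B where B: "\<forall>n. disjoint (B n) \<and> (\<forall>b\<in>B n. open b) \<and> refines (B n) (nbd_cover (U n))"
      "\<Union>(\<Union>n. B n) = UNIV"
    by (elim exE conjE)
  have "d_diam d b < ereal (\<epsilon> n)" if b: "b \<in> B n" for b n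
  proof -
    have "refines (B n) (nbd_cover (U n))" using B(1) by blast
    then obtain a where a: "a \<in> nbd_cover (U n)" "b \<subseteq> a"
      using b unfolding refines_def by blast
    then obtain x where "a = (\<lambda>y. x + y) ` U n" unfolding nbd_cover_def by blast
    with a have sub: "b \<subseteq> (\<lambda>y. x + y) ` U n" by simp
    have "d_diam d b \<le> ereal (2 * (\<epsilon> n / 3))"
    proof (rule d_diam_le)
      fix p q assume "p \<in> b" "q \<in> b"
      with sub have "ereal (d p q) \<le> d_diam d ((\<lambda>y. x + y) ` U n)"
        by (intro d_diam_ge) auto
      also have "\<dots> \<le> ereal (2 * (\<epsilon> n / 3))"
        unfolding U_def by (rule translate_ball_diam[OF metric d(2)])
      finally show "d p q \<le> 2 * (\<epsilon> n / 3)" by simp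
    qed
    also have "\<dots> < ereal (\<epsilon> n)" using \<epsilon> by simp
    finally show ?thesis .
  qed
  with B show "\<exists>V. (\<forall>n. disjoint (V n) \<and> (\<forall>v\<in>V n. open v \<and> d_diam d v < ereal (\<epsilon> n))) \<and>
                 \<Union>(\<Union>n. V n) = UNIV"
    by (intro exI[of _ B]) simp
qed

lemma Haver_imp_Sc:
  fixes d :: "'a::topological_group_add \<Rightarrow> 'a \<Rightarrow> real"
  assumes Haver: "Haver_wrt d" and d: "compatible_metric d" "left_invariant d"
  shows "Sc_nbd_open TYPE('a)"
  unfolding Sc_nbd_open_def
proof (intro allI impI)
  fix U :: "nat \<Rightarrow> 'a set" assume U: "\<forall>n. open (U n) \<and> 0 \<in> U n"
  have "\<forall>n. \<exists>r>0. \<forall>w. d 0 w < r \<longrightarrow> w \<in> U n"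
  proof
    fix n show "\<exists>r>0. \<forall>w. d 0 w < r \<longrightarrow> w \<in> U n"
      using U compatible_metric_ball_subset[OF d(1), of "U n" 0] by blast
  qed
  then have "\<exists>r. \<forall>n. r n > 0 \<and> (\<forall>w. d 0 w < r n \<longrightarrow> w \<in> U n)" by (rule choice)
  then obtain r where r: "\<forall>n. r n > 0 \<and> (\<forall>w. d 0 w < r n \<longrightarrow> w \<in> U n)" ..
  then have r_pos: "\<forall>n. 0 < r n" by blast
  have "\<exists>B. (\<forall>n. disjoint (B n) \<and> (\<forall>b\<in>B n. open b \<and> d_diam d b < ereal (r n))) \<and>
                 \<Union>(\<Union>n. B n) = UNIV"
    using Haver[unfolded Haver_wrt_def, rule_format, OF r_pos[rule_format]] .
  then obtain B where B: "\<forall>n. disjoint (B n) \<and> (\<forall>b\<in>B n. open b \<and> d_diam d b < ereal (r n))"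
      "\<Union>(\<Union>n. B n) = UNIV"
    by (elim exE conjE)
  have translate: "(\<lambda>w. y + w) ` U n \<in> nbd_cover (U n)" for y n
    unfolding nbd_cover_def by blast
  have "refines (B n) (nbd_cover (U n))" for n
    unfolding refines_def
  proof
    fix b assume b: "b \<in> B n"
    show "\<exists>a\<in>nbd_cover (U n). b \<subseteq> a"
    proof (cases "b = {}")
      case True
      then show ?thesis using translate[of 0 n] by blast
    next
      case False
      then obtain y where "y \<in> b" by blast
      have "b \<subseteq> (\<lambda>w. y + w) ` U n"
      proof (rule small_set_in_translate[OF d(2)])
        show "\<forall>w. d 0 w < r n \<longrightarrow> w \<in> U n" using r by blast
        show "d_diam d b < ereal (r n)" using B(1) b by blast
      qed fact
      then show ?thesis using translate[of y n] by blast
    qed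
  qed
  with B show "\<exists>B. (\<forall>n. disjoint (B n) \<and> (\<forall>b\<in>B n. open b) \<and> refines (B n) (nbd_cover (U n))) \<and>
                 \<Union>(\<Union>n. B n) = UNIV"
    by (intro exI[of _ B]) simp
qed

theorem theorem2p2:
  assumes "metrizable_space (euclidean :: 'a::topological_group_add topology)"
  shows "Sc_nbd_open TYPE('a) \<longleftrightarrow>
         (\<forall>d :: 'a \<Rightarrow> 'a \<Rightarrow> real. compatible_metric d \<and> left_invariant d \<longrightarrow> Haver_wrt d)"
proof
  assume "Sc_nbd_open TYPE('a)"
  then show "\<forall>d :: 'a \<Rightarrow> 'a \<Rightarrow> real. compatible_metric d \<and> left_invariant d \<longrightarrow> Haver_wrt d"
    using Sc_imp_Haver by blast
next
  assume Haver: "\<forall>d :: 'a \<Rightarrow> 'a \<Rightarrow> real. compatible_metric d \<and> left_invariant d \<longrightarrow> Haver_wrt d"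
  obtain d :: "'a \<Rightarrow> 'a \<Rightarrow> real" where "compatible_metric d" "left_invariant d"
    using metrizable_group_left_invariant_metric[OF assms] by blast
  then show "Sc_nbd_open TYPE('a)"
    using Haver Haver_imp_Sc by blast
qed

end
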